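(* Let $P_Z$ be a distribution on $\mathcal{Z}$. Let $\tilde S=(\tilde Z_1,\ldots,\tilde Z_{2n})$ consist of $2n$ i.i.d. samples from $P_Z$, let $U=(U_1,\ldots,U_n)$ be i.i.d. Bernoulli$(1/2)$ independent of $\tilde S$, let $Z_i=\tilde Z_{i+U_in}$, $S=(Z_1,\ldots,Z_n)$, and let $W$, taking values in a Polish metric space $(\mathcal{W},\rho)$, be produced from $S$ by $P_{W|S}$. Let $J$ be a uniformly random subset of $[n]$ of size $m$, independent of $(W,\tilde S,U)$. Then $$\mathbb{E}\big[\mathbb{W}(P_{W|\tilde S,U},P_{W|\tilde S,U_{J^c}})\big]\le 2\,\mathbb{E}\big[\mathbb{W}(P_{W|\tilde S,U},P_{W|\tilde S})\big].$$
   Context: For $j\subseteq[n]$, $U_j=(U_i)_{i\in j}$ and $j^c=[n]\setminus j$. $P_{W|\cdots}$ denote conditional distributions of $W$. $\mathbb{W}$ is the order-1 Wasserstein distance with respect to $\rho$: $\mathbb{W}(P,Q)=\inf_{R\in\Pi(P,Q)}\int\rho\,dR$ over couplings. *)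

theory Defs
  imports "HOL-Probability.Probability"
begin

definition couplings :: "'w::polish_space measure \<Rightarrow> 'w measure \<Rightarrow> ('w \<times> 'w) measure set" where
  "couplings P Q = {R. prob_space R \<and> sets R = sets (P \<Otimes>\<^sub>M Q)
                        \<and> distr R P fst = P \<and> distr R Q snd = Q}"

definition wasserstein1 :: "'w::polish_space measure \<Rightarrow> 'w measure \<Rightarrow> ennreal" where
  "wasserstein1 P Q = (INF R \<in> couplings P Q. \<integral>\<^sup>+ x. ennreal (dist (fst x) (snd x)) \<partial>R)"

text \<open>Supersample selection: Z_i = Ztilde_(i + U_i n), indices 0-based.\<close>
definition select_sample :: "nat \<Rightarrow> (nat \<Rightarrow> 'z) \<Rightarrow> (nat \<Rightarrow> bool) \<Rightarrow> (nat \<Rightarrow> 'z)" where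
  "select_sample n s u = (\<lambda>i\<in>{..<n}. s (if u i then i + n else i))"

text \<open>Conditional law of W given (Ztilde, U_{J^c}) where U_{J^c} agrees with u:
average of the kernel over all completions of u on J (U uniform on {0,1}^n).\<close>
definition cond_law :: "nat \<Rightarrow> ((nat \<Rightarrow> 'z) \<Rightarrow> 'w measure) \<Rightarrow> (nat \<Rightarrow> 'z) \<Rightarrow> (nat \<Rightarrow> bool) \<Rightarrow> nat set \<Rightarrow> 'w measure" where
  "cond_law n K s u J =
     measure_pmf (pmf_of_set {v \<in> {..<n} \<rightarrow>\<^sub>E (UNIV::bool set). \<forall>i \<in> {..<n} - J. v i = u i})
       \<bind> (\<lambda>v. K (select_sample n s v))"

end

theory Submission
  imports Defs
begin

text \<open>Fix the supersample s and write F u for the law of W given U = u and Q for the average of F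
  over all u. Given U_{J^c}, the law of W is the average of F over the completions of u on J.
  By the triangle inequality through Q and convexity of W(Q, -) under mixtures, W(F u, that
  average) is at most W(F u, Q) plus the average of W(F v, Q) over the completions v of u.
  Resampling the coordinates in J of a uniform u leaves it uniform, so after averaging over u
  the second term is a copy of the first: this is the factor 2.

  The triangle inequality for W is obtained from an approximate gluing lemma: two couplings are
  glued along a countable Borel partition of the middle space into cells of small diameter,
  which needs no disintegration of measures.\<close>

text \<open>No measurability is assumed: the Wasserstein integrands are not known to be measurable
  in the supersample.\<close>
lemma nn_integral_cmult_le:
  fixes c :: ennreal
  assumes "c \<noteq> top"
  shows "(\<integral>\<^sup>+ x. c * f x \<partial>M) \<le> c * integral\<^sup>N M f"
proof (cases "c = 0")
  case False
  show ?thesis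
    unfolding nn_integral_def[of M "\<lambda>x. c * f x"]
  proof (rule SUP_least)
    fix g assume "g \<in> {g. simple_function M g \<and> g \<le> (\<lambda>x. c * f x)}"
    then have g: "simple_function M g" "\<And>x. g x \<le> c * f x" by (auto simp: le_fun_def)
    define h where "h x = g x / c" for x
    have h: "simple_function M h"
      unfolding h_def divide_ennreal_def using g(1) by (intro simple_function_mult) auto
    have g_eq: "g x = c * h x" for x
      using ennreal_mult_divide_eq[OF False assms, of "g x"]
      by (simp add: h_def ennreal_times_divide mult.commute)
    have "h x \<le> f x" for x
    proof -
      have "h x \<le> c * f x / c" unfolding h_def by (rule divide_right_mono_ennreal[OF g(2)])
      then show ?thesis using ennreal_mult_divide_eq[OF False assms, of "f x"] by (simp add: mult.commute)
    qed
    then have "h \<le> f" by (simp add: le_fun_def)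
    then have "integral\<^sup>S M h \<le> integral\<^sup>N M f"
      unfolding nn_integral_def using h by (intro SUP_upper) auto
    moreover have "integral\<^sup>S M g = c * integral\<^sup>S M h"
      unfolding g_eq by (rule simple_integral_mult[OF h])
    ultimately show "integral\<^sup>S M g \<le> c * integral\<^sup>N M f"
      by (simp add: mult_left_mono)
  qed
qed simp

lemma nn_integral_nat_valued:
  fixes \<phi> :: "'a \<Rightarrow> nat"
  assumes [measurable]: "\<phi> \<in> M \<rightarrow>\<^sub>M count_space UNIV"
  shows "(\<integral>\<^sup>+ x. F (\<phi> x) \<partial>M) = (\<Sum>k. F k * emeasure M (\<phi> -` {k} \<inter> space M))"
proof -
  have [measurable]: "\<phi> -` {k} \<inter> space M \<in> sets M" for k
    using measurable_sets[OF assms, of "{k}"] by simp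
  have "(\<integral>\<^sup>+ x. F (\<phi> x) \<partial>M) = (\<integral>\<^sup>+ x. (\<Sum>k. F k * indicator (\<phi> -` {k} \<inter> space M) x) \<partial>M)"
  proof (rule nn_integral_cong)
    fix x assume "x \<in> space M"
    then have "(\<Sum>k. F k * indicator (\<phi> -` {k} \<inter> space M) x) = (\<Sum>k. if k = \<phi> x then F k else 0)"
      by (intro suminf_cong) (auto simp: indicator_def)
    also have "\<dots> = F (\<phi> x)"
      using sums_single[of "\<phi> x" F] sums_unique by metis
    finally show "F (\<phi> x) = (\<Sum>k. F k * indicator (\<phi> -` {k} \<inter> space M) x)" by simp
  qed
  also have "\<dots> = (\<Sum>k. \<integral>\<^sup>+ x. F k * indicator (\<phi> -` {k} \<inter> space M) x \<partial>M)"
    by (rule nn_integral_suminf) measurable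
  also have "\<dots> = (\<Sum>k. F k * emeasure M (\<phi> -` {k} \<inter> space M))"
    by (intro suminf_cong nn_integral_cmult_indicator) measurable
  finally show ?thesis .
qed

lemma bind_uniform_measure_fibers:
  fixes \<phi> :: "'a \<Rightarrow> nat"
  assumes "prob_space M" and [measurable]: "\<phi> \<in> M \<rightarrow>\<^sub>M count_space UNIV"
    and P: "\<And>k. P k \<in> space (subprob_algebra M)"
    and P_fiber: "\<And>k. emeasure M (\<phi> -` {k} \<inter> space M) \<noteq> 0
                    \<Longrightarrow> P k = uniform_measure M (\<phi> -` {k} \<inter> space M)"
  shows "distr M (count_space UNIV) \<phi> \<bind> P = M"
proof -
  interpret prob_space M by fact
  define fib where "fib k = \<phi> -` {k} \<inter> space M" for k
  have fib_sets[measurable]: "fib k \<in> sets M" for k unfolding fib_def by measurable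
  have P_meas: "P \<in> distr M (count_space UNIV) \<phi> \<rightarrow>\<^sub>M subprob_algebra M"
    using P by (simp add: measurable_count_space_eq1)
  show ?thesis
  proof (rule measure_eqI)
    show "sets (distr M (count_space UNIV) \<phi> \<bind> P) = sets M"
      using sets_bind_measurable[OF P_meas] by simp
    fix B assume "B \<in> sets (distr M (count_space UNIV) \<phi> \<bind> P)"
    then have B[measurable]: "B \<in> sets M" using sets_bind_measurable[OF P_meas] by simp
    have weighted_cell: "emeasure (P k) B * emeasure M (fib k) = emeasure M (fib k \<inter> B)" for k
    proof (cases "emeasure M (fib k) = 0")
      case True
      then have "emeasure M (fib k \<inter> B) = 0"
        using emeasure_mono[of "fib k \<inter> B" "fib k" M] by simp
      then show ?thesis using True by simp
    next
      case False
      have "emeasure M (fib k) / emeasure M (fib k) = 1"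
        using False by (simp add: less_top[symmetric])
      then show ?thesis
        using P_fiber[of k] False by (simp add: fib_def[symmetric] ennreal_divide_times)
    qed
    have "emeasure (distr M (count_space UNIV) \<phi> \<bind> P) B
        = (\<integral>\<^sup>+ k. emeasure (P k) B \<partial>distr M (count_space UNIV) \<phi>)"
      by (rule emeasure_bind[OF _ P_meas B]) simp
    also have "\<dots> = (\<integral>\<^sup>+ x. emeasure (P (\<phi> x)) B \<partial>M)"
      by (rule nn_integral_distr) (simp_all add: measurable_count_space_eq1)
    also have "\<dots> = (\<Sum>k. emeasure (P k) B * emeasure M (fib k))"
      unfolding fib_def by (rule nn_integral_nat_valued) simp
    also have "\<dots> = (\<Sum>k. emeasure M (fib k \<inter> B))"
      by (simp add: weighted_cell)
    also have "\<dots> = emeasure M (\<Union>k. fib k \<inter> B)"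
      by (rule suminf_emeasure) (auto simp: disjoint_family_on_def fib_def)
    also have "(\<Union>k. fib k \<inter> B) = B"
      using sets.sets_into_space[OF B] by (auto simp: fib_def)
    finally show "emeasure (distr M (count_space UNIV) \<phi> \<bind> P) B = emeasure M B" .
  qed
qed

lemma distr_pair_snd:
  assumes "prob_space M" "prob_space N"
  shows "distr (M \<Otimes>\<^sub>M N) N snd = N"
proof (rule measure_eqI)
  interpret M: prob_space M by fact
  interpret N: prob_space N by fact
  show "sets (distr (M \<Otimes>\<^sub>M N) N snd) = sets N" by simp
  fix C assume "C \<in> sets (distr (M \<Otimes>\<^sub>M N) N snd)"
  then have C: "C \<in> sets N" by simp
  have "snd -` C \<inter> space (M \<Otimes>\<^sub>M N) = space M \<times> C"
    using sets.sets_into_space[OF C] by (auto simp: space_pair_measure)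
  then show "emeasure (distr (M \<Otimes>\<^sub>M N) N snd) C = emeasure N C"
    using C by (simp add: emeasure_distr N.emeasure_pair_measure_Times M.emeasure_space_1)
qed

locale matched_partitions =
  M1: prob_space M1 + M2: prob_space M2
  for M1 :: "'a measure" and M2 :: "'b measure" and \<phi>1 :: "'a \<Rightarrow> nat" and \<phi>2 :: "'b \<Rightarrow> nat" +
  assumes measurable_\<phi>1[measurable]: "\<phi>1 \<in> M1 \<rightarrow>\<^sub>M count_space UNIV"
    and measurable_\<phi>2[measurable]: "\<phi>2 \<in> M2 \<rightarrow>\<^sub>M count_space UNIV"
    and same_weights: "distr M1 (count_space UNIV) \<phi>1 = distr M2 (count_space UNIV) \<phi>2"
begin

definition cell1 :: "nat \<Rightarrow> 'a set" where
  "cell1 k = \<phi>1 -` {k} \<inter> space M1"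

definition cell2 :: "nat \<Rightarrow> 'b set" where
  "cell2 k = \<phi>2 -` {k} \<inter> space M2"

definition weight :: "nat \<Rightarrow> ennreal" where
  "weight k = emeasure M1 (cell1 k)"

definition cell_coupling :: "nat \<Rightarrow> ('a \<times> 'b) measure" where
  "cell_coupling k = (if weight k = 0 then M1 \<Otimes>\<^sub>M M2
     else uniform_measure M1 (cell1 k) \<Otimes>\<^sub>M uniform_measure M2 (cell2 k))"

definition coupling :: "('a \<times> 'b) measure" where
  "coupling = distr M1 (count_space UNIV) \<phi>1 \<bind> cell_coupling"

lemma sets_cell1[measurable]: "cell1 k \<in> sets M1"
  unfolding cell1_def by measurable

lemma sets_cell2[measurable]: "cell2 k \<in> sets M2"
  unfolding cell2_def by measurable

lemma emeasure_cell2: "emeasure M2 (cell2 k) = weight k"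
  using arg_cong[OF same_weights, of "\<lambda>N. emeasure N {k}"]
  by (simp add: emeasure_distr weight_def cell1_def cell2_def vimage_def Int_commute)

lemma prob_space_uniform_cells:
  assumes "weight k \<noteq> 0"
  shows "prob_space (uniform_measure M1 (cell1 k))" "prob_space (uniform_measure M2 (cell2 k))"
  using assms emeasure_cell2[of k] unfolding weight_def
  by (auto intro!: prob_space_uniform_measure)

lemma cell_coupling_in_prob_algebra: "cell_coupling k \<in> space (prob_algebra (M1 \<Otimes>\<^sub>M M2))"
proof (cases "weight k = 0")
  case True
  then show ?thesis
    by (simp add: cell_coupling_def space_prob_algebra prob_space_pair M1.prob_space_axioms
        M2.prob_space_axioms)
next
  case False
  have "sets (uniform_measure M1 (cell1 k) \<Otimes>\<^sub>M uniform_measure M2 (cell2 k)) = sets (M1 \<Otimes>\<^sub>M M2)"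
    by (rule sets_pair_measure_cong) simp_all
  then show ?thesis
    using prob_space_pair[OF prob_space_uniform_cells[OF False]] False
    by (simp add: cell_coupling_def space_prob_algebra)
qed

lemma measurable_cell_coupling:
  "cell_coupling \<in> count_space UNIV \<rightarrow>\<^sub>M prob_algebra (M1 \<Otimes>\<^sub>M M2)"
  using cell_coupling_in_prob_algebra by (simp add: measurable_count_space_eq1)

lemma measurable_cell_coupling_subprob:
  "cell_coupling \<in> distr M1 (count_space UNIV) \<phi>1 \<rightarrow>\<^sub>M subprob_algebra (M1 \<Otimes>\<^sub>M M2)"
  unfolding measurable_cong_sets[OF sets_distr refl]
  by (rule measurable_prob_algebraD[OF measurable_cell_coupling])

lemma distr_\<phi>1_in_prob_algebra:
  "distr M1 (count_space UNIV) \<phi>1 \<in> space (prob_algebra (count_space UNIV))"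
  by (auto simp: space_prob_algebra intro!: M1.prob_space_distr)

lemma prob_space_coupling: "prob_space coupling"
  unfolding coupling_def
  by (rule prob_space_bind'[OF distr_\<phi>1_in_prob_algebra measurable_cell_coupling])

lemma sets_coupling: "sets coupling = sets (M1 \<Otimes>\<^sub>M M2)"
  unfolding coupling_def
  by (rule sets_bind'[OF distr_\<phi>1_in_prob_algebra measurable_cell_coupling])

lemma distr_cell_coupling_fst:
  "distr (cell_coupling k) M1 fst = (if weight k = 0 then M1 else uniform_measure M1 (cell1 k))"
proof (cases "weight k = 0")
  case False
  have "distr (cell_coupling k) M1 fst = distr (cell_coupling k) (uniform_measure M1 (cell1 k)) fst"
    by (rule distr_cong) simp_all
  then show ?thesis
    using prob_space.distr_pair_fst[OF prob_space_uniform_cells(2)[OF False]] False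
    by (simp add: cell_coupling_def)
qed (simp add: cell_coupling_def M2.distr_pair_fst)

lemma distr_cell_coupling_snd:
  "distr (cell_coupling k) M2 snd = (if weight k = 0 then M2 else uniform_measure M2 (cell2 k))"
proof (cases "weight k = 0")
  case False
  have "distr (cell_coupling k) M2 snd = distr (cell_coupling k) (uniform_measure M2 (cell2 k)) snd"
    by (rule distr_cong) simp_all
  then show ?thesis
    using distr_pair_snd[OF prob_space_uniform_cells[OF False]] False
    by (simp add: cell_coupling_def)
qed (simp add: cell_coupling_def distr_pair_snd M1.prob_space_axioms M2.prob_space_axioms)

lemma distr_coupling_fst: "distr coupling M1 fst = M1"
proof -
  have "distr coupling M1 fst = distr M1 (count_space UNIV) \<phi>1 \<bind> (\<lambda>k. distr (cell_coupling k) M1 fst)"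
    unfolding coupling_def by (rule distr_bind[OF measurable_cell_coupling_subprob]) simp_all
  also have "\<dots> = M1"
  proof (rule bind_uniform_measure_fibers[OF M1.prob_space_axioms measurable_\<phi>1])
    show "distr (cell_coupling k) M1 fst \<in> space (subprob_algebra M1)" for k
      unfolding distr_cell_coupling_fst using prob_space_uniform_cells(1)[of k]
      by (simp add: space_subprob_algebra prob_space_imp_subprob_space M1.prob_space_axioms)
  qed (simp add: distr_cell_coupling_fst weight_def cell1_def)
  finally show ?thesis .
qed

lemma distr_coupling_snd: "distr coupling M2 snd = M2"
proof -
  have "distr coupling M2 snd = distr M2 (count_space UNIV) \<phi>2 \<bind> (\<lambda>k. distr (cell_coupling k) M2 snd)"
    unfolding coupling_def same_weights[symmetric]
    by (rule distr_bind[OF measurable_cell_coupling_subprob]) simp_all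
  also have "\<dots> = M2"
  proof (rule bind_uniform_measure_fibers[OF M2.prob_space_axioms measurable_\<phi>2])
    show "distr (cell_coupling k) M2 snd \<in> space (subprob_algebra M2)" for k
      unfolding distr_cell_coupling_snd using prob_space_uniform_cells(2)[of k]
      by (simp add: space_subprob_algebra prob_space_imp_subprob_space M2.prob_space_axioms)
  qed (simp add: distr_cell_coupling_snd emeasure_cell2[symmetric] cell2_def)
  finally show ?thesis .
qed

lemma AE_weight_nonzero: "AE x in M1. weight (\<phi>1 x) \<noteq> 0"
proof (rule AE_I')
  show "(\<Union>k\<in>{k. weight k = 0}. cell1 k) \<in> null_sets M1"
    by (rule null_sets_UN') (auto simp: weight_def)
  show "{x \<in> space M1. \<not> weight (\<phi>1 x) \<noteq> 0} \<subseteq> (\<Union>k\<in>{k. weight k = 0}. cell1 k)"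
    by (auto simp: cell1_def)
qed

lemma AE_cell_coupling_matched:
  assumes "weight k \<noteq> 0"
  shows "AE y in cell_coupling k. \<phi>1 (fst y) = \<phi>2 (snd y)"
proof -
  define U1 where "U1 = uniform_measure M1 (cell1 k)"
  define U2 where "U2 = uniform_measure M2 (cell2 k)"
  have U: "prob_space U1" "prob_space U2"
    using prob_space_uniform_cells[OF assms] by (simp_all add: U1_def U2_def)
  have "AE x in U1. \<phi>1 x = k"
    unfolding U1_def by (rule AE_uniform_measureI) (auto simp: cell1_def)
  then have "AE y in U1 \<Otimes>\<^sub>M U2. \<phi>1 (fst y) = k"
    using AE_distrD[OF measurable_fst, of "\<lambda>x. \<phi>1 x = k" U1 U2]
      prob_space.distr_pair_fst[OF U(2), of U1] by metis
  moreover have "AE x in U2. \<phi>2 x = k"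
    unfolding U2_def by (rule AE_uniform_measureI) (auto simp: cell2_def)
  then have "AE y in U1 \<Otimes>\<^sub>M U2. \<phi>2 (snd y) = k"
    using AE_distrD[OF measurable_snd, of "\<lambda>x. \<phi>2 x = k" U1 U2]
      distr_pair_snd[OF U] by metis
  ultimately have "AE y in U1 \<Otimes>\<^sub>M U2. \<phi>1 (fst y) = \<phi>2 (snd y)"
    by eventually_elim simp
  moreover have "cell_coupling k = U1 \<Otimes>\<^sub>M U2"
    using assms by (simp add: cell_coupling_def U1_def U2_def)
  ultimately show ?thesis by (simp only:)
qed

lemma AE_coupling_matched: "AE x in coupling. \<phi>1 (fst x) = \<phi>2 (snd x)"
proof -
  have "Measurable.pred (M1 \<Otimes>\<^sub>M M2) (\<lambda>x. \<exists>k. \<phi>1 (fst x) = k \<and> \<phi>2 (snd x) = k)"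
    by measurable
  then have "Measurable.pred (M1 \<Otimes>\<^sub>M M2) (\<lambda>x. \<phi>1 (fst x) = \<phi>2 (snd x))"
    by (simp add: eq_commute)
  moreover have "AE k in distr M1 (count_space UNIV) \<phi>1. weight k \<noteq> 0"
    using AE_weight_nonzero by (subst AE_distr_iff) simp_all
  ultimately show ?thesis
    unfolding coupling_def using AE_cell_coupling_matched
    by (subst AE_bind[OF measurable_cell_coupling_subprob]) auto
qed

end

lemma borel_partition_small_cells:
  fixes e :: real
  assumes "e > 0"
  obtains cell :: "'a::{metric_space, second_countable_topology} \<Rightarrow> nat"
  where "cell \<in> borel \<rightarrow>\<^sub>M count_space UNIV" "\<And>x y. cell x = cell y \<Longrightarrow> dist x y < e"
proof -
  obtain D :: "'a set" where D: "countable D" "\<And>X. open X \<Longrightarrow> X \<noteq> {} \<Longrightarrow> \<exists>d\<in>D. d \<in> X"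
    by (rule countable_dense_setE) blast
  define c where "c = from_nat_into D"
  have "\<exists>k. dist (c k) y < e / 2" for y
  proof -
    obtain d where "d \<in> D" "d \<in> ball y (e / 2)" using D(2)[of "ball y (e / 2)"] assms by auto
    moreover obtain k where "c k = d" using from_nat_into_surj[OF D(1) \<open>d \<in> D\<close>] by (auto simp: c_def)
    ultimately show ?thesis by (auto simp: dist_commute)
  qed
  define cell where "cell y = (LEAST k. dist (c k) y < e / 2)" for y
  have near: "dist (c (cell y)) y < e / 2" for y
    unfolding cell_def by (rule LeastI_ex) fact
  have "cell \<in> borel \<rightarrow>\<^sub>M count_space UNIV"
    unfolding cell_def by (rule measurable_Least) measurable
  moreover have "dist x y < e" if "cell x = cell y" for x y
    using dist_triangle3[of x y "c (cell x)"] near[of x] near[of y] that by simp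
  ultimately show ?thesis using that by blast
qed

definition transport_cost :: "('w::metric_space \<times> 'w) measure \<Rightarrow> ennreal" where
  "transport_cost R = (\<integral>\<^sup>+ x. ennreal (dist (fst x) (snd x)) \<partial>R)"

lemma wasserstein1_eq_INF_transport_cost:
  "wasserstein1 P Q = (INF R \<in> couplings P Q. transport_cost R)"
  unfolding wasserstein1_def transport_cost_def by simp

lemma wasserstein1_le_transport_cost: "R \<in> couplings P Q \<Longrightarrow> wasserstein1 P Q \<le> transport_cost R"
  unfolding wasserstein1_eq_INF_transport_cost by (rule INF_lower)

lemma mem_couplings_iff:
  assumes "sets P = sets borel" "sets Q = sets borel"
  shows "R \<in> couplings P Q \<longleftrightarrow> prob_space R \<and> sets R = sets (borel \<Otimes>\<^sub>M borel)
           \<and> distr R borel fst = P \<and> distr R borel snd = Q"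
proof -
  have "sets (P \<Otimes>\<^sub>M Q) = sets (borel \<Otimes>\<^sub>M borel)" by (rule sets_pair_measure_cong[OF assms])
  moreover have "distr R P fst = distr R borel fst" "distr R Q snd = distr R borel snd"
    by (rule distr_cong; simp add: assms)+
  ultimately show ?thesis unfolding couplings_def by auto
qed

lemma pair_measure_mem_couplings:
  assumes "prob_space P" "prob_space Q"
  shows "P \<Otimes>\<^sub>M Q \<in> couplings P Q"
  using prob_space_pair[OF assms] prob_space.distr_pair_fst[OF assms(2), of P] distr_pair_snd[OF assms]
  by (simp add: couplings_def)

lemma couplings_near_wasserstein1:
  assumes "prob_space P" "prob_space Q" "e > 0"
  obtains R where "R \<in> couplings P Q" "transport_cost R \<le> wasserstein1 P Q + ennreal e"
proof (cases "wasserstein1 P Q = top")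
  case True
  then show ?thesis using that pair_measure_mem_couplings[OF assms(1,2)] by simp
next
  case False
  then have "wasserstein1 P Q < wasserstein1 P Q + ennreal e"
    using assms(3) ennreal_add_left_cancel_less[of "wasserstein1 P Q" 0 "ennreal e"]
    by (simp add: top.not_eq_extremum)
  then obtain R where "R \<in> couplings P Q" "transport_cost R < wasserstein1 P Q + ennreal e"
    unfolding wasserstein1_eq_INF_transport_cost[of P Q] by (auto simp: INF_less_iff)
  then show ?thesis using that by (auto intro: less_imp_le)
qed

definition outer_marginal :: "(('w::polish_space \<times> 'w) \<times> ('w \<times> 'w)) measure \<Rightarrow> ('w \<times> 'w) measure" where
  "outer_marginal \<Gamma> = distr \<Gamma> (borel \<Otimes>\<^sub>M borel) (\<lambda>x. (fst (fst x), snd (snd x)))"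

context
  fixes P Q T :: "'w::polish_space measure" and R1 R2 :: "('w \<times> 'w) measure"
  assumes P: "sets P = sets borel" and Q: "sets Q = sets borel" and T: "sets T = sets borel"
    and R1: "R1 \<in> couplings P Q" and R2: "R2 \<in> couplings Q T"
begin

lemma outer_marginal_mem_couplings:
  assumes "prob_space \<Gamma>" and [measurable_cong]: "sets \<Gamma> = sets (R1 \<Otimes>\<^sub>M R2)"
    and "distr \<Gamma> R1 fst = R1" "distr \<Gamma> R2 snd = R2"
  shows "outer_marginal \<Gamma> \<in> couplings P T"
proof -
  have R1': "sets R1 = sets (borel \<Otimes>\<^sub>M borel)" "distr R1 borel fst = P"
    using R1 by (simp_all add: mem_couplings_iff[OF P Q])
  have R2': "sets R2 = sets (borel \<Otimes>\<^sub>M borel)" "distr R2 borel snd = T"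
    using R2 by (simp_all add: mem_couplings_iff[OF Q T])
  note [measurable_cong] = R1'(1) R2'(1)
  have "distr (outer_marginal \<Gamma>) borel fst = distr (distr \<Gamma> R1 fst) borel fst"
    "distr (outer_marginal \<Gamma>) borel snd = distr (distr \<Gamma> R2 snd) borel snd"
    unfolding outer_marginal_def by (simp_all add: distr_distr comp_def)
  moreover have "prob_space (outer_marginal \<Gamma>)"
    unfolding outer_marginal_def by (intro prob_space.prob_space_distr assms(1)) simp
  ultimately show ?thesis
    using assms R1' R2' by (simp add: mem_couplings_iff[OF P T] outer_marginal_def)
qed

lemma transport_cost_outer_marginal_le:
  assumes "prob_space \<Gamma>" and [measurable_cong]: "sets \<Gamma> = sets (R1 \<Otimes>\<^sub>M R2)"
    and \<Gamma>1: "distr \<Gamma> R1 fst = R1" and \<Gamma>2: "distr \<Gamma> R2 snd = R2"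
    and close: "AE x in \<Gamma>. dist (snd (fst x)) (fst (snd x)) \<le> e" and "0 \<le> e"
  shows "transport_cost (outer_marginal \<Gamma>) \<le> transport_cost R1 + transport_cost R2 + ennreal e"
proof -
  have [measurable_cong]: "sets R1 = sets (borel \<Otimes>\<^sub>M borel)" "sets R2 = sets (borel \<Otimes>\<^sub>M borel)"
    using R1 R2 by (simp_all add: mem_couplings_iff[OF P Q] mem_couplings_iff[OF Q T])
  define d where "d x = ennreal (dist (fst x) (snd x))" for x :: "'w \<times> 'w"
  have [measurable]: "d \<in> borel_measurable (borel \<Otimes>\<^sub>M borel)" unfolding d_def by measurable
  have "transport_cost (outer_marginal \<Gamma>) = (\<integral>\<^sup>+ x. ennreal (dist (fst (fst x)) (snd (snd x))) \<partial>\<Gamma>)"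
    unfolding outer_marginal_def transport_cost_def by (simp add: nn_integral_distr)
  also have "\<dots> \<le> (\<integral>\<^sup>+ x. d (fst x) + d (snd x) + ennreal e \<partial>\<Gamma>)"
  proof (rule nn_integral_mono_AE)
    show "AE x in \<Gamma>. ennreal (dist (fst (fst x)) (snd (snd x))) \<le> d (fst x) + d (snd x) + ennreal e"
      using close
    proof eventually_elim
      case (elim x)
      have "dist (fst (fst x)) (snd (snd x)) \<le> dist (fst (fst x)) (snd (fst x)) + e + dist (fst (snd x)) (snd (snd x))"
        using dist_triangle[of "fst (fst x)" "snd (snd x)" "snd (fst x)"]
          dist_triangle[of "snd (fst x)" "snd (snd x)" "fst (snd x)"] elim by linarith
      then show ?case
        using \<open>0 \<le> e\<close> by (simp add: d_def ennreal_plus[symmetric] ac_simps del: ennreal_plus)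
    qed
  qed
  also have "\<dots> = (\<integral>\<^sup>+ x. d (fst x) \<partial>\<Gamma>) + (\<integral>\<^sup>+ x. d (snd x) \<partial>\<Gamma>) + ennreal e"
    using prob_space.emeasure_space_1[OF \<open>prob_space \<Gamma>\<close>] by (simp add: nn_integral_add d_def)
  also have "(\<integral>\<^sup>+ x. d (fst x) \<partial>\<Gamma>) = (\<integral>\<^sup>+ x. d x \<partial>distr \<Gamma> R1 fst)"
    by (rule nn_integral_distr[symmetric]) measurable
  also have "\<dots> = transport_cost R1" by (simp add: \<Gamma>1 d_def transport_cost_def)
  also have "(\<integral>\<^sup>+ x. d (snd x) \<partial>\<Gamma>) = (\<integral>\<^sup>+ x. d x \<partial>distr \<Gamma> R2 snd)"
    by (rule nn_integral_distr[symmetric]) measurable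
  also have "\<dots> = transport_cost R2" by (simp add: \<Gamma>2 d_def transport_cost_def)
  finally show ?thesis .
qed

lemma approximate_gluing:
  assumes "e > 0"
  obtains R where "R \<in> couplings P T"
    "transport_cost R \<le> transport_cost R1 + transport_cost R2 + ennreal e"
proof -
  have R1': "prob_space R1" "sets R1 = sets (borel \<Otimes>\<^sub>M borel)" "distr R1 borel snd = Q"
    using R1 by (simp_all add: mem_couplings_iff[OF P Q])
  have R2': "prob_space R2" "sets R2 = sets (borel \<Otimes>\<^sub>M borel)" "distr R2 borel fst = Q"
    using R2 by (simp_all add: mem_couplings_iff[OF Q T])
  note [measurable_cong] = R1'(2) R2'(2)
  obtain cell :: "'w \<Rightarrow> nat" where [measurable]: "cell \<in> borel \<rightarrow>\<^sub>M count_space UNIV"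
    and cell: "\<And>x y. cell x = cell y \<Longrightarrow> dist x y < e"
    using borel_partition_small_cells[OF \<open>e > 0\<close>] by blast
  have "distr R1 (count_space UNIV) (\<lambda>x. cell (snd x)) = distr Q (count_space UNIV) cell"
    by (subst R1'(3)[symmetric], subst distr_distr) (simp_all add: comp_def)
  also have "\<dots> = distr R2 (count_space UNIV) (\<lambda>x. cell (fst x))"
    by (subst R2'(3)[symmetric], subst distr_distr) (simp_all add: comp_def)
  finally have same_weights:
    "distr R1 (count_space UNIV) (\<lambda>x. cell (snd x)) = distr R2 (count_space UNIV) (\<lambda>x. cell (fst x))" .
  have "(\<lambda>x. cell (snd x)) \<in> R1 \<rightarrow>\<^sub>M count_space UNIV" "(\<lambda>x. cell (fst x)) \<in> R2 \<rightarrow>\<^sub>M count_space UNIV"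
    by measurable
  then interpret matched_partitions R1 R2 "\<lambda>x. cell (snd x)" "\<lambda>x. cell (fst x)"
    using R1'(1) R2'(1) same_weights by (simp add: matched_partitions_def matched_partitions_axioms_def)
  have "AE x in coupling. dist (snd (fst x)) (fst (snd x)) \<le> e"
    using AE_coupling_matched by eventually_elim (simp add: cell less_imp_le)
  then show ?thesis
    using that outer_marginal_mem_couplings transport_cost_outer_marginal_le \<open>e > 0\<close>
      prob_space_coupling sets_coupling distr_coupling_fst distr_coupling_snd
    by (meson less_imp_le)
qed

end

lemma wasserstein1_triangle:
  fixes P Q T :: "'w::polish_space measure"
  assumes "prob_space P" "prob_space Q" "prob_space T"
    and P: "sets P = sets borel" and Q: "sets Q = sets borel" and T: "sets T = sets borel"
  shows "wasserstein1 P T \<le> wasserstein1 P Q + wasserstein1 Q T"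
proof (rule ennreal_le_epsilon)
  fix e :: real assume "e > 0"
  then have "e / 3 > 0" by simp
  obtain R1 where R1: "R1 \<in> couplings P Q" "transport_cost R1 \<le> wasserstein1 P Q + ennreal (e / 3)"
    using couplings_near_wasserstein1[OF assms(1,2) \<open>e / 3 > 0\<close>] .
  obtain R2 where R2: "R2 \<in> couplings Q T" "transport_cost R2 \<le> wasserstein1 Q T + ennreal (e / 3)"
    using couplings_near_wasserstein1[OF assms(2,3) \<open>e / 3 > 0\<close>] .
  obtain R where R: "R \<in> couplings P T"
      "transport_cost R \<le> transport_cost R1 + transport_cost R2 + ennreal (e / 3)"
    using approximate_gluing[OF P Q T R1(1) R2(1) \<open>e / 3 > 0\<close>] .
  have "wasserstein1 P T \<le> transport_cost R1 + transport_cost R2 + ennreal (e / 3)"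
    using wasserstein1_le_transport_cost[OF R(1)] R(2) by (rule order_trans)
  also have "\<dots> \<le> (wasserstein1 P Q + ennreal (e / 3)) + (wasserstein1 Q T + ennreal (e / 3)) + ennreal (e / 3)"
    using R1(2) R2(2) by (intro add_mono) auto
  also have "\<dots> = wasserstein1 P Q + wasserstein1 Q T + ennreal (e / 3 + e / 3 + e / 3)"
    using \<open>e > 0\<close> by (simp add: ennreal_plus[symmetric] ac_simps del: ennreal_plus)
  finally show "wasserstein1 P T \<le> wasserstein1 P Q + wasserstein1 Q T + ennreal e" by simp
qed

lemma wasserstein1_le_commute:
  fixes P Q :: "'w::polish_space measure"
  assumes P: "sets P = sets borel" and Q: "sets Q = sets borel"
  shows "wasserstein1 P Q \<le> wasserstein1 Q P"
  unfolding wasserstein1_eq_INF_transport_cost[of Q P]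
proof (rule INF_greatest)
  fix R assume "R \<in> couplings Q P"
  then have R: "prob_space R" "sets R = sets (borel \<Otimes>\<^sub>M borel)"
      "distr R borel fst = Q" "distr R borel snd = P"
    by (simp_all add: mem_couplings_iff[OF Q P])
  note [measurable_cong] = R(2)
  define S where "S = distr R (borel \<Otimes>\<^sub>M borel) (\<lambda>x. (snd x, fst x))"
  have "distr S borel fst = P" "distr S borel snd = Q"
    unfolding S_def R(3,4)[symmetric] by (simp_all add: distr_distr comp_def)
  moreover have "prob_space S" unfolding S_def by (intro prob_space.prob_space_distr R(1)) simp
  ultimately have "S \<in> couplings P Q" by (simp add: mem_couplings_iff[OF P Q] S_def)
  moreover have "transport_cost S = transport_cost R"
    unfolding S_def transport_cost_def by (simp add: nn_integral_distr dist_commute)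
  ultimately show "wasserstein1 P Q \<le> transport_cost R"
    by (metis wasserstein1_le_transport_cost)
qed

lemma wasserstein1_commute:
  fixes P Q :: "'w::polish_space measure"
  assumes "sets P = sets borel" "sets Q = sets borel"
  shows "wasserstein1 P Q = wasserstein1 Q P"
  using wasserstein1_le_commute[OF assms] wasserstein1_le_commute[OF assms(2,1)] by (rule antisym)

lemma bind_pmf_couplings:
  fixes Q :: "'w::polish_space measure" and F :: "'a \<Rightarrow> 'w measure"
  assumes "prob_space Q" and Q: "sets Q = sets borel" and F: "\<And>v. F v \<in> space (prob_algebra borel)"
    and R: "\<And>v. R v \<in> couplings Q (F v)"
  shows "measure_pmf p \<bind> R \<in> couplings Q (measure_pmf p \<bind> F)"
    and "transport_cost (measure_pmf p \<bind> R) = (\<integral>\<^sup>+ v. transport_cost (R v) \<partial>p)"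
proof -
  have F': "sets (F v) = sets borel" for v
    using F[of v] by (simp add: space_prob_algebra)
  have R': "prob_space (R v)" "sets (R v) = sets (borel \<Otimes>\<^sub>M borel)"
      "distr (R v) borel fst = Q" "distr (R v) borel snd = F v" for v
    using R[of v] by (simp_all add: mem_couplings_iff[OF Q F'])
  have p: "measure_pmf p \<in> space (prob_algebra (count_space UNIV))"
    by (simp add: space_prob_algebra measure_pmf.prob_space_axioms)
  have R_meas: "R \<in> count_space UNIV \<rightarrow>\<^sub>M prob_algebra (borel \<Otimes>\<^sub>M borel)"
    using R'(1,2) by (simp add: measurable_count_space_eq1 space_prob_algebra)
  have R_meas_p: "R \<in> measure_pmf p \<rightarrow>\<^sub>M subprob_algebra (borel \<Otimes>\<^sub>M borel)"
    using measurable_prob_algebraD[OF R_meas] by simp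
  have "distr (measure_pmf p \<bind> R) borel fst = measure_pmf p \<bind> (\<lambda>v. distr (R v) borel fst)"
    by (rule distr_bind[OF R_meas_p]) simp_all
  also have "\<dots> = Q"
    by (simp add: R'(3) bind_const' \<open>prob_space Q\<close> prob_space_imp_subprob_space
        measure_pmf.prob_space_axioms)
  finally have "distr (measure_pmf p \<bind> R) borel fst = Q" .
  moreover have "distr (measure_pmf p \<bind> R) borel snd = measure_pmf p \<bind> F"
    by (subst distr_bind[OF R_meas_p]) (simp_all add: R'(4))
  moreover have "prob_space (measure_pmf p \<bind> R)" "sets (measure_pmf p \<bind> R) = sets (borel \<Otimes>\<^sub>M borel)"
    by (rule prob_space_bind'[OF p R_meas], rule sets_bind'[OF p R_meas])
  moreover have "sets (measure_pmf p \<bind> F) = sets borel"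
    by (rule sets_bind'[OF p]) (simp add: measurable_count_space_eq1 F)
  ultimately show "measure_pmf p \<bind> R \<in> couplings Q (measure_pmf p \<bind> F)"
    by (simp add: mem_couplings_iff[OF Q])
  show "transport_cost (measure_pmf p \<bind> R) = (\<integral>\<^sup>+ v. transport_cost (R v) \<partial>p)"
    unfolding transport_cost_def by (rule nn_integral_bind[OF _ R_meas_p]) measurable
qed

lemma wasserstein1_bind_pmf_le:
  fixes Q :: "'w::polish_space measure" and F :: "'a \<Rightarrow> 'w measure"
  assumes "prob_space Q" and Q: "sets Q = sets borel" and F: "\<And>v. F v \<in> space (prob_algebra borel)"
  shows "wasserstein1 Q (measure_pmf p \<bind> F) \<le> (\<integral>\<^sup>+ v. wasserstein1 Q (F v) \<partial>p)"
proof (rule ennreal_le_epsilon)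
  fix e :: real assume "e > 0"
  have "prob_space (F v)" for v
    using F[of v] by (simp add: space_prob_algebra)
  then have "\<exists>R. R \<in> couplings Q (F v) \<and> transport_cost R \<le> wasserstein1 Q (F v) + ennreal e" for v
    using couplings_near_wasserstein1[OF \<open>prob_space Q\<close> _ \<open>e > 0\<close>] by metis
  then obtain R where R: "\<And>v. R v \<in> couplings Q (F v)"
    and R_cost: "\<And>v. transport_cost (R v) \<le> wasserstein1 Q (F v) + ennreal e"
    by metis
  have "wasserstein1 Q (measure_pmf p \<bind> F) \<le> transport_cost (measure_pmf p \<bind> R)"
    by (rule wasserstein1_le_transport_cost[OF bind_pmf_couplings(1)[OF assms R]])
  also have "\<dots> = (\<integral>\<^sup>+ v. transport_cost (R v) \<partial>p)"
    by (rule bind_pmf_couplings(2)[OF assms R])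
  also have "\<dots> \<le> (\<integral>\<^sup>+ v. wasserstein1 Q (F v) + ennreal e \<partial>p)"
    by (intro nn_integral_mono R_cost)
  also have "\<dots> = (\<integral>\<^sup>+ v. wasserstein1 Q (F v) \<partial>p) + ennreal e"
    by (simp add: nn_integral_add measure_pmf.emeasure_space_1)
  finally show "wasserstein1 Q (measure_pmf p \<bind> F) \<le> (\<integral>\<^sup>+ v. wasserstein1 Q (F v) \<partial>p) + ennreal e" .
qed

lemma wasserstein1_invariant_kernel_le:
  fixes F :: "'a \<Rightarrow> 'w::polish_space measure" and p :: "'a pmf" and \<kappa> :: "'a \<Rightarrow> 'a pmf"
  assumes F: "\<And>v. F v \<in> space (prob_algebra borel)" and invariant: "bind_pmf p \<kappa> = p"
  shows "(\<integral>\<^sup>+ u. wasserstein1 (F u) (measure_pmf (\<kappa> u) \<bind> F) \<partial>p)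
       \<le> 2 * (\<integral>\<^sup>+ u. wasserstein1 (F u) (measure_pmf p \<bind> F) \<partial>p)"
proof -
  have F': "sets (F v) = sets borel" "prob_space (F v)" for v
    using F[of v] by (auto simp: space_prob_algebra)
  have F_meas: "F \<in> count_space UNIV \<rightarrow>\<^sub>M prob_algebra borel"
    using F by (simp add: measurable_count_space_eq1)
  have mixture: "sets (measure_pmf q \<bind> F) = sets borel" "prob_space (measure_pmf q \<bind> F)" for q
    using measure_pmf_in_subprob_algebra F_meas
    by (auto intro!: sets_bind'[OF _ F_meas] prob_space_bind'[OF _ F_meas]
        simp: space_prob_algebra measure_pmf.prob_space_axioms)
  define Q where "Q = measure_pmf p \<bind> F"
  define g where "g v = wasserstein1 (F v) Q" for v
  have pointwise: "wasserstein1 (F u) (measure_pmf (\<kappa> u) \<bind> F) \<le> g u + (\<integral>\<^sup>+ v. g v \<partial>\<kappa> u)" for u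
  proof -
    have "wasserstein1 (F u) (measure_pmf (\<kappa> u) \<bind> F)
        \<le> wasserstein1 (F u) Q + wasserstein1 Q (measure_pmf (\<kappa> u) \<bind> F)"
      unfolding Q_def by (intro wasserstein1_triangle F' mixture)
    also have "wasserstein1 Q (measure_pmf (\<kappa> u) \<bind> F) \<le> (\<integral>\<^sup>+ v. wasserstein1 Q (F v) \<partial>\<kappa> u)"
      unfolding Q_def by (intro wasserstein1_bind_pmf_le mixture F)
    also have "\<dots> = (\<integral>\<^sup>+ v. g v \<partial>\<kappa> u)"
      unfolding g_def Q_def by (intro nn_integral_cong wasserstein1_commute mixture F')
    finally show ?thesis by (simp add: g_def add_left_mono)
  qed
  have "(\<integral>\<^sup>+ u. wasserstein1 (F u) (measure_pmf (\<kappa> u) \<bind> F) \<partial>p)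
      \<le> (\<integral>\<^sup>+ u. g u + (\<integral>\<^sup>+ v. g v \<partial>\<kappa> u) \<partial>p)"
    by (intro nn_integral_mono pointwise)
  also have "\<dots> = (\<integral>\<^sup>+ u. g u \<partial>p) + (\<integral>\<^sup>+ v. g v \<partial>bind_pmf p \<kappa>)"
    by (simp add: nn_integral_add)
  also have "\<dots> = 2 * (\<integral>\<^sup>+ u. wasserstein1 (F u) (measure_pmf p \<bind> F) \<partial>p)"
    by (simp add: invariant g_def Q_def mult_2)
  finally show ?thesis .
qed

definition completions :: "'i set \<Rightarrow> ('i \<Rightarrow> 'a set) \<Rightarrow> 'i set \<Rightarrow> ('i \<Rightarrow> 'a) \<Rightarrow> ('i \<Rightarrow> 'a) set" where
  "completions I A J u = {v \<in> PiE I A. \<forall>i \<in> I - J. v i = u i}"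

lemma completions_subset: "completions I A J u \<subseteq> PiE I A"
  by (auto simp: completions_def)

lemma completions_empty: "u \<in> PiE I A \<Longrightarrow> completions I A {} u = {u}"
  by (auto simp: completions_def intro: PiE_ext)

lemma completions_superset: "I \<subseteq> J \<Longrightarrow> completions I A J u = PiE I A"
  by (auto simp: completions_def)

lemma mem_completions_commute:
  "u \<in> PiE I A \<Longrightarrow> v \<in> PiE I A \<Longrightarrow> v \<in> completions I A J u \<longleftrightarrow> u \<in> completions I A J v"
  by (auto simp: completions_def)

lemma card_completions:
  assumes "finite I" "u \<in> PiE I A"
  shows "card (completions I A J u) = (\<Prod>i\<in>I \<inter> J. card (A i))"
proof -
  have "completions I A J u = PiE I (\<lambda>i. if i \<in> J then A i else {u i})"
    using assms(2) unfolding completions_def by (auto simp: PiE_iff extensional_def split: if_splits) metis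
  then have "card (completions I A J u) = (\<Prod>i\<in>I. if i \<in> J then card (A i) else 1)"
    using assms(1) by (simp add: card_PiE if_distrib cong: if_cong)
  also have "\<dots> = (\<Prod>i\<in>I \<inter> J. card (A i))"
    using assms(1) by (simp add: prod.If_cases Int_def)
  finally show ?thesis .
qed

lemma bind_pmf_of_set_completions:
  assumes I: "finite I" and A: "\<And>i. i \<in> I \<Longrightarrow> finite (A i) \<and> A i \<noteq> {}"
  shows "bind_pmf (pmf_of_set (PiE I A)) (\<lambda>u. pmf_of_set (completions I A J u)) = pmf_of_set (PiE I A)"
proof (rule pmf_eqI)
  fix v
  define V where "V = PiE I A"
  define c where "c = (\<Prod>i\<in>I \<inter> J. card (A i))"
  have V: "finite V" "V \<noteq> {}" using I A by (auto simp: V_def finite_PiE PiE_eq_empty_iff)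
  have c: "c > 0" using I A by (auto simp: c_def card_gt_0_iff intro!: prod_pos)
  have card_C: "card (completions I A J u) = c" if "u \<in> V" for u
    using card_completions[OF I] that by (simp add: V_def c_def)
  have C: "finite (completions I A J u)" "completions I A J u \<noteq> {}" if "u \<in> V" for u
    using that V c card_C[OF that] by (auto intro: finite_subset[OF completions_subset] simp: V_def)
  have "pmf (bind_pmf (pmf_of_set V) (\<lambda>u. pmf_of_set (completions I A J u))) v
      = (\<Sum>u\<in>V. indicator (completions I A J u) v / real c) / real (card V)"
    using V C card_C by (simp add: pmf_bind integral_pmf_of_set)
  also have "(\<Sum>u\<in>V. indicator (completions I A J u) v / real c) = indicator V v"
  proof (cases "v \<in> V")
    case True
    have "(\<Sum>u\<in>V. indicator (completions I A J u) v / real c)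
        = (\<Sum>u\<in>V. indicator (completions I A J v) u / real c)"
      using True by (intro sum.cong) (auto simp: indicator_def V_def mem_completions_commute)
    also have "\<dots> = real (card (V \<inter> completions I A J v)) / real c"
      using V(1) by (simp add: sum_divide_distrib[symmetric] indicator_def sum.inter_restrict[symmetric])
    also have "V \<inter> completions I A J v = completions I A J v"
      using completions_subset[of I A J v] by (auto simp: V_def)
    finally show ?thesis using True c card_C by simp
  next
    case False
    then have "v \<notin> completions I A J u" for u
      using completions_subset[of I A J u] unfolding V_def by blast
    then show ?thesis using False by simp
  qed
  finally show "pmf (bind_pmf (pmf_of_set V) (\<lambda>u. pmf_of_set (completions I A J u))) v = pmf (pmf_of_set V) v"
    using V by simp
qed

lemma cond_law_eq_bind_completions:
  "cond_law n K s u J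
     = measure_pmf (pmf_of_set (completions {..<n} (\<lambda>_. UNIV) J u)) \<bind> (\<lambda>v. K (select_sample n s v))"
  by (simp add: cond_law_def completions_def)

lemma select_sample_in_space:
  assumes "s \<in> space (PiM {..<2*n} (\<lambda>_. M))"
  shows "select_sample n s v \<in> space (PiM {..<n} (\<lambda>_. M))"
  using assms by (auto simp: space_PiM PiE_iff select_sample_def)

lemma wasserstein1_cond_law_resample_le:
  fixes K :: "(nat \<Rightarrow> 'z) \<Rightarrow> 'w::polish_space measure"
  assumes K: "K \<in> PiM {..<n} (\<lambda>_. M) \<rightarrow>\<^sub>M prob_algebra (borel :: 'w measure)"
    and s: "s \<in> space (PiM {..<2*n} (\<lambda>_. M))"
  defines "V \<equiv> {..<n} \<rightarrow>\<^sub>E (UNIV::bool set)"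
  shows "(\<integral>\<^sup>+ u. wasserstein1 (cond_law n K s u {}) (cond_law n K s u J) \<partial>pmf_of_set V)
      \<le> 2 * (\<integral>\<^sup>+ u. wasserstein1 (cond_law n K s u {}) (cond_law n K s u {..<n}) \<partial>pmf_of_set V)"
proof -
  define \<kappa> where "\<kappa> u = pmf_of_set (completions {..<n} (\<lambda>_. UNIV :: bool set) J u)" for u
  have V: "finite V" "V \<noteq> {}" by (simp_all add: V_def finite_PiE PiE_eq_empty_iff)
  have invariant: "bind_pmf (pmf_of_set V) \<kappa> = pmf_of_set V"
    unfolding V_def \<kappa>_def by (rule bind_pmf_of_set_completions) auto
  define F where "F v = K (select_sample n s v)" for v
  have F: "F v \<in> space (prob_algebra borel)" for v
    unfolding F_def by (rule measurable_space[OF K select_sample_in_space[OF s]])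
  have F_meas: "F \<in> count_space UNIV \<rightarrow>\<^sub>M subprob_algebra borel"
    by (rule measurable_prob_algebraD) (simp add: measurable_count_space_eq1 F)
  have law_empty: "cond_law n K s u {} = F u" if "u \<in> V" for u
    using that bind_return[OF F_meas, of u]
    by (simp add: cond_law_eq_bind_completions completions_empty V_def pmf_of_set_singleton
        return_pmf.rep_eq F_def[symmetric])
  have "cond_law n K s u J = measure_pmf (\<kappa> u) \<bind> F" for u
    by (simp add: cond_law_eq_bind_completions \<kappa>_def F_def[abs_def])
  then have "(\<integral>\<^sup>+ u. wasserstein1 (cond_law n K s u {}) (cond_law n K s u J) \<partial>pmf_of_set V)
      = (\<integral>\<^sup>+ u. wasserstein1 (F u) (measure_pmf (\<kappa> u) \<bind> F) \<partial>pmf_of_set V)"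
    using V by (intro nn_integral_cong_AE) (simp add: AE_measure_pmf_iff law_empty)
  also have "\<dots> \<le> 2 * (\<integral>\<^sup>+ u. wasserstein1 (F u) (measure_pmf (pmf_of_set V) \<bind> F) \<partial>pmf_of_set V)"
    by (rule wasserstein1_invariant_kernel_le[of F, OF F invariant])
  also have "cond_law n K s u {..<n} = measure_pmf (pmf_of_set V) \<bind> F" for u
    by (simp add: cond_law_eq_bind_completions completions_superset V_def F_def[abs_def])
  then have "(\<integral>\<^sup>+ u. wasserstein1 (F u) (measure_pmf (pmf_of_set V) \<bind> F) \<partial>pmf_of_set V)
      = (\<integral>\<^sup>+ u. wasserstein1 (cond_law n K s u {}) (cond_law n K s u {..<n}) \<partial>pmf_of_set V)"
    using V by (intro nn_integral_cong_AE) (simp add: AE_measure_pmf_iff law_empty)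
  finally show ?thesis .
qed

theorem proposition7:
  fixes M :: "'z measure" and K :: "(nat \<Rightarrow> 'z) \<Rightarrow> 'w::polish_space measure"
    and n m :: nat
  assumes "prob_space M"
    and "K \<in> PiM {..<n} (\<lambda>_. M) \<rightarrow>\<^sub>M prob_algebra (borel :: 'w measure)"
    and "m \<le> n"
  shows "(\<integral>\<^sup>+ s. \<integral>\<^sup>+ J. \<integral>\<^sup>+ u.
            wasserstein1 (cond_law n K s u {}) (cond_law n K s u J)
          \<partial>measure_pmf (pmf_of_set ({..<n} \<rightarrow>\<^sub>E (UNIV::bool set)))
          \<partial>measure_pmf (pmf_of_set {J. J \<subseteq> {..<n} \<and> card J = m})
          \<partial>PiM {..<2*n} (\<lambda>_. M))
       \<le> 2 * (\<integral>\<^sup>+ s. \<integral>\<^sup>+ u.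
            wasserstein1 (cond_law n K s u {}) (cond_law n K s u {..<n})
          \<partial>measure_pmf (pmf_of_set ({..<n} \<rightarrow>\<^sub>E (UNIV::bool set)))
          \<partial>PiM {..<2*n} (\<lambda>_. M))"
proof -
  define V where "V = {..<n} \<rightarrow>\<^sub>E (UNIV::bool set)"
  define Js where "Js = {J. J \<subseteq> {..<n} \<and> card J = m}"
  have "(\<integral>\<^sup>+ J. \<integral>\<^sup>+ u. wasserstein1 (cond_law n K s u {}) (cond_law n K s u J) \<partial>pmf_of_set V \<partial>pmf_of_set Js)
      \<le> 2 * (\<integral>\<^sup>+ u. wasserstein1 (cond_law n K s u {}) (cond_law n K s u {..<n}) \<partial>pmf_of_set V)"
    if "s \<in> space (PiM {..<2*n} (\<lambda>_. M))" for s
    using nn_integral_mono[OF wasserstein1_cond_law_resample_le[OF assms(2) that], of "pmf_of_set Js" id]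
    by (simp add: V_def measure_pmf.emeasure_space_1)
  then have "(\<integral>\<^sup>+ s. \<integral>\<^sup>+ J. \<integral>\<^sup>+ u. wasserstein1 (cond_law n K s u {}) (cond_law n K s u J)
          \<partial>pmf_of_set V \<partial>pmf_of_set Js \<partial>PiM {..<2*n} (\<lambda>_. M))
      \<le> (\<integral>\<^sup>+ s. 2 * (\<integral>\<^sup>+ u. wasserstein1 (cond_law n K s u {}) (cond_law n K s u {..<n})
          \<partial>pmf_of_set V) \<partial>PiM {..<2*n} (\<lambda>_. M))"
    by (intro nn_integral_mono)
  also have "\<dots> \<le> 2 * (\<integral>\<^sup>+ s. \<integral>\<^sup>+ u. wasserstein1 (cond_law n K s u {}) (cond_law n K s u {..<n})
          \<partial>pmf_of_set V \<partial>PiM {..<2*n} (\<lambda>_. M))"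
    by (rule nn_integral_cmult_le) simp
  finally show ?thesis unfolding V_def Js_def .
qed

end
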